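(* Let $d\ge1$, let $P\subseteq[-1,1]^d$ be a convex $d$-dimensional polytope containing the origin, let $\alpha\le 1$ be a constant, and let $\mathcal{A}$ be an algorithm such that for every $\vec{w}\in\mathbb{R}^d$, $\mathcal{A}(\vec{w})\in P$ and $\mathcal{A}(\vec{w})\cdot\vec{w}\ge\alpha\cdot\max_{\vec{x}\in P}\vec{x}\cdot\vec{w}$. Let $P_1=\{\vec{\pi} : \vec{\pi}\cdot\vec{w}\le\mathcal{A}(\vec{w})\cdot\vec{w}\ \forall\vec{w}\in[-1,1]^d\}$, and let $WSO$ be the weird separation oracle defined (with arbitrary parameters $N\in\mathbb{N}$, $\delta>0$) as in the context. If $\vec{\pi}\in P_1$, then $WSO(\vec{\pi})=$"yes".
   Context: "Running the ellipsoid algorithm with a weird separation oracle" (an algorithm which on input $\vec{x}$ outputs either "yes" or a hyperplane violated by $\vec{x}$, the set of accepted points not necessarily being convex) means: start from a suitable initial ellipsoid; query the oracle on the center of the current ellipsoid; if accepted, output it as a feasible point; otherwise update the ellipsoid using the returned violated hyperplane as in the standard ellipsoid algorithm; repeat for a predetermined number $N$ of iterations, and if no feasible point is found, output "infeasible". The oracle $WSO$, on input $\vec{\pi}\in\mathbb{R}^d$, runs the ellipsoid algorithm for $N$ iterations on the following problem in the variables $(\vec{w},t)$: constraints $\vec{w}\in[-1,1]^d$; $t-\vec{\pi}\cdot\vec{w}\le-\delta$; and the weird oracle $\widehat{WSO}(\vec{w},t)$, which answers "yes" if $t\ge\mathcal{A}(\vec{w})\cdot\vec{w}$ and otherwise outputs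 the violated hyperplane $t'\ge\mathcal{A}(\vec{w})\cdot\vec{w}'$ (in the variables $(\vec{w}',t')$). If this inner ellipsoid run outputs "infeasible", $WSO(\vec{\pi})=$"yes"; if it finds a feasible point $(t^*,\vec{w}^* )$, $WSO$ outputs the violated hyperplane $\vec{w}^*\cdot\vec{\pi}'\le t^*$ (in the variable $\vec{\pi}'$). *)

theory Defs
  imports "HOL-Analysis.Analysis"
begin

text \<open>Answer of a (weird) separation oracle: either "yes", or a hyperplane
  a . x <= b (normal a, offset b) that is violated by the queried point.\<close>
datatype 'a answer = Yes | Hyp 'a real

text \<open>Standard central-cut ellipsoid update. The ellipsoid is
  E(c,Q) = {x. (x - c) . Qinv (x - c) <= 1} with Q symmetric positive definite,
  represented as a linear map Q.\<close>
definition ellipsoid_step :: "'a::euclidean_space \<Rightarrow> 'a \<Rightarrow> ('a \<Rightarrow> 'a) \<Rightarrow> 'a \<times> ('a \<Rightarrow> 'a)" where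
  "ellipsoid_step a c Q =
     (let n = real DIM('a); Qa = Q a; g = a \<bullet> Qa in
      (c - (1 / (n + 1) / sqrt g) *\<^sub>R Qa,
       \<lambda>x. (n\<^sup>2 / (n\<^sup>2 - 1)) *\<^sub>R (Q x - (2 / (n + 1) * (Qa \<bullet> x) / g) *\<^sub>R Qa)))"

fun ellipsoid_run :: "('a::euclidean_space \<Rightarrow> 'a answer) \<Rightarrow> nat \<Rightarrow> 'a \<Rightarrow> ('a \<Rightarrow> 'a) \<Rightarrow> 'a option" where
  "ellipsoid_run orc 0 c Q = None"
| "ellipsoid_run orc (Suc k) c Q =
     (case orc c of
        Yes \<Rightarrow> Some c
      | Hyp a b \<Rightarrow> (case ellipsoid_step a c Q of (c', Q') \<Rightarrow> ellipsoid_run orc k c' Q'))"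

text \<open>The weird oracle WSO-hat on (w,t): "yes" iff t >= A(w) . w, otherwise the
  violated hyperplane t' >= A(w) . w', i.e. (A(w), -1) . (w',t') <= 0.\<close>
definition WSO_hat :: "(real^'d \<Rightarrow> real^'d) \<Rightarrow> (real^'d) \<times> real \<Rightarrow> ((real^'d) \<times> real) answer" where
  "WSO_hat A p = (case p of (w, t) \<Rightarrow>
     (if t \<ge> A w \<bullet> w then Yes else Hyp (A w, -1) 0))"

definition inner_oracle :: "(real^'d \<Rightarrow> real^'d) \<Rightarrow> real^'d \<Rightarrow> real \<Rightarrow> (real^'d) \<times> real \<Rightarrow> ((real^'d) \<times> real) answer" where
  "inner_oracle A \<pi> \<delta> p = (case p of (w, t) \<Rightarrow>
     (if \<exists>i. \<bar>w $ i\<bar> > 1 then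
        (let i = (SOME i. \<bar>w $ i\<bar> > 1) in Hyp (sgn (w $ i) *\<^sub>R axis i 1, 0) 1)
      else if \<not> (t - \<pi> \<bullet> w \<le> - \<delta>) then Hyp (- \<pi>, 1) (- \<delta>)
      else WSO_hat A (w, t)))"

definition WSO :: "(real^'d \<Rightarrow> real^'d) \<Rightarrow> nat \<Rightarrow> real \<Rightarrow> (real^'d) \<times> real \<Rightarrow> ((real^'d) \<times> real \<Rightarrow> (real^'d) \<times> real) \<Rightarrow> real^'d \<Rightarrow> (real^'d) answer" where
  "WSO A N \<delta> c0 Q0 \<pi> =
     (case ellipsoid_run (inner_oracle A \<pi> \<delta>) N c0 Q0 of
        None \<Rightarrow> Yes
      | Some (w, t) \<Rightarrow> Hyp w t)"

end

theory Submission
  imports Defs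
begin

text \<open>For \<open>\<pi> \<in> P\<^sub>1\<close> the inner problem is infeasible: any \<open>(w, t)\<close> accepted by
  all three constraints would satisfy \<open>\<pi> \<bullet> w \<le> A w \<bullet> w \<le> t \<le> \<pi> \<bullet> w - \<delta>\<close>.
  Hence the inner oracle never says "yes", the ellipsoid run reports "infeasible",
  and \<open>WSO\<close> accepts \<open>\<pi>\<close>. No property of \<open>P\<close> or \<open>\<alpha>\<close> is needed.\<close>

lemma ellipsoid_run_never_accepting:
  assumes "\<And>p. orc p \<noteq> Yes"
  shows "ellipsoid_run orc k c Q = None"
proof (induction k arbitrary: c Q)
  case 0
  then show ?case by simp
next
  case (Suc k)
  obtain a b where "orc c = Hyp a b"
    using assms by (cases "orc c") auto
  then show ?case
    using Suc.IH by (simp split: prod.split)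
qed

lemma inner_oracle_YesD:
  assumes "inner_oracle A \<pi> \<delta> (w, t) = Yes"
  shows "\<forall>i. \<bar>w $ i\<bar> \<le> 1" and "t - \<pi> \<bullet> w \<le> - \<delta>" and "A w \<bullet> w \<le> t"
  using assms unfolding inner_oracle_def WSO_hat_def
  by (auto simp: Let_def not_less split: if_splits)

lemma inner_oracle_never_accepts:
  assumes \<pi>: "\<And>w. \<forall>i. \<bar>w $ i\<bar> \<le> 1 \<Longrightarrow> \<pi> \<bullet> w \<le> A w \<bullet> w"
    and "\<delta> > 0"
  shows "inner_oracle A \<pi> \<delta> p \<noteq> Yes"
proof
  assume accepted: "inner_oracle A \<pi> \<delta> p = Yes"
  obtain w t where p: "p = (w, t)" by (cases p)
  note feasible = inner_oracle_YesD[OF accepted[unfolded p]]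
  have "\<pi> \<bullet> w \<le> A w \<bullet> w" using \<pi> feasible(1) .
  with feasible(2,3) \<open>\<delta> > 0\<close> show False by linarith
qed

theorem fact2:
  fixes P :: "(real^'d) set" and A :: "real^'d \<Rightarrow> real^'d" and \<alpha> :: real
    and N :: nat and \<delta> :: real and c0 :: "(real^'d) \<times> real"
    and Q0 :: "(real^'d) \<times> real \<Rightarrow> (real^'d) \<times> real" and \<pi> :: "real^'d"
  assumes "polytope P" and "aff_dim P = int CARD('d)"
    and "P \<subseteq> {x. \<forall>i. \<bar>x $ i\<bar> \<le> 1}" and "0 \<in> P"
    and "\<alpha> \<le> 1"
    and "\<And>w. A w \<in> P"
    and "\<And>w. A w \<bullet> w \<ge> \<alpha> * (SUP x\<in>P. x \<bullet> w)"
    and "\<delta> > 0"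
    and "\<pi> \<in> {\<pi>. \<forall>w. (\<forall>i. \<bar>w $ i\<bar> \<le> 1) \<longrightarrow> \<pi> \<bullet> w \<le> A w \<bullet> w}"
  shows "WSO A N \<delta> c0 Q0 \<pi> = Yes"
proof -
  have "\<And>p. inner_oracle A \<pi> \<delta> p \<noteq> Yes"
    using inner_oracle_never_accepts assms(8,9) by blast
  then have "ellipsoid_run (inner_oracle A \<pi> \<delta>) N c0 Q0 = None"
    by (rule ellipsoid_run_never_accepting)
  then show ?thesis
    unfolding WSO_def by simp
qed

end
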